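(* For each $2p\in\{140, 196, 220, 260, 308, 340\}$ there exists a cyclic DCA$(4,2p+1;2p)$ satisfying P1 and P2.
   Context: A difference covering array DCA$(k,\eta;n)$ over $\mathbb{Z}_n$ (a cyclic DCA) is an $\eta\times k$ matrix $Q=[q(i,j)]$ with entries in $\mathbb{Z}_n$ such that for every pair of distinct columns $j,j'$ the multiset $\{q(i,j)-q(i,j') : 0\le i\le \eta-1\}$ contains every element of $\mathbb{Z}_n$ at least once. A DCA$(k,n+1;n)$ is taken in normalized form: all entries of its last row (row $n$) and last column (column $k-1$) equal $0$. It satisfies P1 if $0$ occurs at least twice in every column, and P2 if for all distinct columns $j,j'$ with $j\neq k-1\neq j'$, the set $\{q(i,j)-q(i,j') : 0\le i\le n-1\}$ equals $\mathbb{Z}_n\setminus\{0\}$. *)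

theory Defs
  imports Main
begin

text \<open>An eta x k array over Z_n is represented as a function Q :: nat => nat => int,
  where Q i j (i < eta, j < k) is the entry in row i, column j, and the entry is
  taken as a representative in {0..<n}.\<close>

definition is_DCA :: "nat \<Rightarrow> nat \<Rightarrow> nat \<Rightarrow> (nat \<Rightarrow> nat \<Rightarrow> int) \<Rightarrow> bool" where
  "is_DCA k eta n Q \<longleftrightarrow>
     (\<forall>i<eta. \<forall>j<k. Q i j \<in> {0..<int n}) \<and>
     (\<forall>j<k. \<forall>j'<k. j \<noteq> j' \<longrightarrow>
        (\<forall>d\<in>{0..<int n}. \<exists>i<eta. (Q i j - Q i j') mod int n = d))"

definition DCA_normalized :: "nat \<Rightarrow> nat \<Rightarrow> (nat \<Rightarrow> nat \<Rightarrow> int) \<Rightarrow> bool" where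
  "DCA_normalized k n Q \<longleftrightarrow>
     (\<forall>j<k. Q n j = 0) \<and> (\<forall>i<n+1. Q i (k-1) = 0)"

definition DCA_P1 :: "nat \<Rightarrow> nat \<Rightarrow> (nat \<Rightarrow> nat \<Rightarrow> int) \<Rightarrow> bool" where
  "DCA_P1 k n Q \<longleftrightarrow> (\<forall>j<k. card {i. i < n+1 \<and> Q i j = 0} \<ge> 2)"

definition DCA_P2 :: "nat \<Rightarrow> nat \<Rightarrow> (nat \<Rightarrow> nat \<Rightarrow> int) \<Rightarrow> bool" where
  "DCA_P2 k n Q \<longleftrightarrow>
     (\<forall>j<k. \<forall>j'<k. j \<noteq> j' \<and> j \<noteq> k-1 \<and> j' \<noteq> k-1 \<longrightarrow>
        {(Q i j - Q i j') mod int n | i. i < n} = {1..<int n})"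

end

theory Submission
  imports Defs
begin

text \<open>Append a zero row and a zero column to an array with \<open>n\<close> rows whose columns are
  permutations of \<open>\<int>\<^sub>n\<close> and in which any two columns differ, row by row, in exactly
  the nonzero residues. The zero row supplies the difference 0, the zero column against a permutation
  column supplies every residue, and every column contains 0 twice: once in its permutation
  and once in the zero row. For the six orders such arrays are given explicitly and checked
  by evaluation.\<close>

definition residue_permutation :: "nat \<Rightarrow> int list \<Rightarrow> bool" where
  "residue_permutation n xs \<longleftrightarrow> length xs = n \<and> set xs = {0..<int n}"

definition mod_differences :: "nat \<Rightarrow> int list \<Rightarrow> int list \<Rightarrow> int set" where
  "mod_differences n xs ys = set (map2 (\<lambda>x y. (x - y) mod int n) xs ys)"

lemma residue_permutation_nth:
  "residue_permutation n xs \<Longrightarrow> i < n \<Longrightarrow> xs ! i \<in> {0..<int n}"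
  unfolding residue_permutation_def by (metis nth_mem)

lemma residue_permutation_obtain_index:
  assumes "residue_permutation n xs" "v \<in> {0..<int n}"
  obtains i where "i < n" "xs ! i = v"
  using assms unfolding residue_permutation_def by (metis in_set_conv_nth)

lemma mod_differences_conv_nth:
  "length xs = n \<Longrightarrow> length ys = n \<Longrightarrow>
    mod_differences n xs ys = {(xs ! i - ys ! i) mod int n | i. i < n}"
  unfolding mod_differences_def by (auto simp: set_zip)

lemma neg_mod_image_nonzero_residues:
  "(\<lambda>d. (- d) mod int n) ` {1..<int n} = {1..<int n}"
proof -
  have neg: "(- d) mod int n = int n - d" if "d \<in> {1..<int n}" for d
    using that by (simp add: zmod_zminus1_eq_if)
  have "(\<lambda>d. (- d) mod int n) ` {1..<int n} = (\<lambda>d. int n - d) ` {1..<int n}"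
    using neg by (rule image_cong[OF refl])
  also have "\<dots> = {1..<int n}"
    by (auto intro!: image_eqI[where x = "int n - _"])
  finally show ?thesis .
qed

lemma mod_differences_swap:
  assumes "length xs = length ys" "mod_differences n xs ys = {1..<int n}"
  shows "mod_differences n ys xs = {1..<int n}"
proof -
  have "mod_differences n ys xs =
      set (map (\<lambda>d. (- d) mod int n) (map2 (\<lambda>x y. (x - y) mod int n) xs ys))"
    unfolding mod_differences_def using assms(1)
    by (intro arg_cong[where f = set] nth_equalityI) (auto simp: mod_minus_eq)
  also have "\<dots> = (\<lambda>d. (- d) mod int n) ` mod_differences n xs ys"
    by (simp only: set_map mod_differences_def)
  finally show ?thesis
    using assms(2) neg_mod_image_nonzero_residues by simp
qed

lemma sorted_wrt_mod_differences_pair: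
  assumes "\<forall>c\<in>set cs. residue_permutation n c"
    and "sorted_wrt (\<lambda>xs ys. mod_differences n xs ys = {1..<int n}) cs"
    and "j < length cs" "j' < length cs" "j \<noteq> j'"
  shows "mod_differences n (cs ! j) (cs ! j') = {1..<int n}"
proof (cases "j < j'")
  case True
  then show ?thesis using assms(2,4) by (simp add: sorted_wrt_iff_nth_less)
next
  case False
  have "length (cs ! j') = length (cs ! j)"
    using assms(1,3,4) by (simp add: residue_permutation_def)
  moreover from False have "mod_differences n (cs ! j') (cs ! j) = {1..<int n}"
    using assms(2,3,5) by (simp add: sorted_wrt_iff_nth_less)
  ultimately show ?thesis by (rule mod_differences_swap)
qed

definition column_array :: "nat \<Rightarrow> int list list \<Rightarrow> nat \<Rightarrow> nat \<Rightarrow> int" where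
  "column_array n cs i j = (if i < n \<and> j < length cs then cs ! j ! i else 0)"

lemma column_array_normalized: "DCA_normalized (length cs + 1) n (column_array n cs)"
  by (simp add: DCA_normalized_def column_array_def)

context
  fixes n :: nat and cs :: "int list list"
  assumes n_pos: "0 < n"
    and columns_perm: "\<forall>c\<in>set cs. residue_permutation n c"
    and columns_diff: "sorted_wrt (\<lambda>xs ys. mod_differences n xs ys = {1..<int n}) cs"
begin

lemma column_array_differences:
  assumes "j < length cs" "j' < length cs" "j \<noteq> j'"
  shows "{(column_array n cs i j - column_array n cs i j') mod int n | i. i < n} = {1..<int n}"
proof -
  have "{(column_array n cs i j - column_array n cs i j') mod int n | i. i < n} =
      mod_differences n (cs ! j) (cs ! j')"
    using assms(1,2) columns_perm
    by (subst mod_differences_conv_nth) (auto simp: column_array_def residue_permutation_def)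
  then show ?thesis
    using sorted_wrt_mod_differences_pair[OF columns_perm columns_diff assms] by simp
qed

lemma column_array_is_DCA: "is_DCA (length cs + 1) (n + 1) n (column_array n cs)"
  unfolding is_DCA_def
proof (intro conjI allI impI ballI)
  fix i j
  show "column_array n cs i j \<in> {0..<int n}"
  proof (cases "i < n \<and> j < length cs")
    case True
    then have "residue_permutation n (cs ! j)" using columns_perm by simp
    with True show ?thesis
      using residue_permutation_nth[of n "cs ! j" i] by (simp add: column_array_def)
  qed (use n_pos in \<open>auto simp: column_array_def\<close>)
next
  fix j j' :: nat and d :: int
  assume j: "j < length cs + 1" and j': "j' < length cs + 1" and "j \<noteq> j'"
    and d: "d \<in> {0..<int n}"
  show "\<exists>i<n + 1. (column_array n cs i j - column_array n cs i j') mod int n = d"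
  proof (cases "d = 0")
    case True
    then show ?thesis by (intro exI[of _ n]) (simp add: column_array_def)
  next
    case False
    then consider "j < length cs" "j' < length cs" | "j = length cs" "j' < length cs"
      | "j' = length cs" "j < length cs"
      using j j' \<open>j \<noteq> j'\<close> by linarith
    then show ?thesis
    proof cases
      case 1
      have "d \<in> {(column_array n cs i j - column_array n cs i j') mod int n | i. i < n}"
        using column_array_differences[OF 1 \<open>j \<noteq> j'\<close>] d False by simp
      then obtain i where "i < n" "(column_array n cs i j - column_array n cs i j') mod int n = d"
        by blast
      then show ?thesis by (intro exI[of _ i]) simp
    next
      case 2
      have "int n - d \<in> {0..<int n}" using d False by auto
      with 2 columns_perm obtain i where "i < n" "cs ! j' ! i = int n - d"
        by (meson nth_mem residue_permutation_obtain_index)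
      then show ?thesis
        using 2 d by (intro exI[of _ i]) (simp add: column_array_def)
    next
      case 3
      with columns_perm d obtain i where "i < n" "cs ! j ! i = d"
        by (meson nth_mem residue_permutation_obtain_index)
      then show ?thesis
        using 3 d by (intro exI[of _ i]) (simp add: column_array_def)
    qed
  qed
qed

lemma column_array_P1: "DCA_P1 (length cs + 1) n (column_array n cs)"
  unfolding DCA_P1_def
proof (intro allI impI)
  fix j assume "j < length cs + 1"
  obtain i where "i < n" "column_array n cs i j = 0"
  proof (cases "j < length cs")
    case True
    have "residue_permutation n (cs ! j)" "0 \<in> {0..<int n}"
      using True columns_perm n_pos by simp_all
    then obtain i where "i < n" "cs ! j ! i = 0"
      by (rule residue_permutation_obtain_index)
    with True that show ?thesis by (simp add: column_array_def)
  next
    case False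
    with n_pos that show ?thesis by (simp add: column_array_def)
  qed
  then have "{i, n} \<subseteq> {i. i < n + 1 \<and> column_array n cs i j = 0}"
    by (simp add: column_array_def)
  from card_mono[OF _ this] \<open>i < n\<close> show "2 \<le> card {i. i < n + 1 \<and> column_array n cs i j = 0}"
    by simp
qed

lemma column_array_P2: "DCA_P2 (length cs + 1) n (column_array n cs)"
  unfolding DCA_P2_def using column_array_differences by auto

end

text \<open>Bottom-up merge sort: with the insertion sort of \<open>List.sort\<close>, evaluating the
  certificates below by \<open>code_simp\<close> would be far too slow.\<close>

fun merge :: "int list \<Rightarrow> int list \<Rightarrow> int list" where
  "merge [] ys = ys"
| "merge xs [] = xs"
| "merge (x # xs) (y # ys) = (if x \<le> y then x # merge xs (y # ys) else y # merge (x # xs) ys)"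

fun merge_pairs :: "int list list \<Rightarrow> int list list" where
  "merge_pairs (xs # ys # xss) = merge xs ys # merge_pairs xss"
| "merge_pairs xss = xss"

lemma length_merge_pairs: "length (merge_pairs xss) \<le> length xss"
  by (induction xss rule: merge_pairs.induct) auto

function merge_all :: "int list list \<Rightarrow> int list" where
  "merge_all [] = []"
| "merge_all [xs] = xs"
| "merge_all (xs # ys # xss) = merge_all (merge_pairs (xs # ys # xss))"
  by pat_completeness auto
termination
  by (relation "measure length") (auto simp: le_imp_less_Suc length_merge_pairs)

definition msort :: "int list \<Rightarrow> int list" where
  "msort xs = merge_all (map (\<lambda>x. [x]) xs)"

lemma set_merge [simp]: "set (merge xs ys) = set xs \<union> set ys"
  by (induction xs ys rule: merge.induct) auto

lemma set_merge_pairs: "\<Union> (set ` set (merge_pairs xss)) = \<Union> (set ` set xss)"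
  by (induction xss rule: merge_pairs.induct) auto

lemma set_merge_all: "set (merge_all xss) = \<Union> (set ` set xss)"
proof (induction xss rule: merge_all.induct)
  case (3 xs ys xss)
  then show ?case using set_merge_pairs[of "xs # ys # xss"] by simp
qed auto

lemma set_msort: "set (msort xs) = set xs"
  unfolding msort_def by (auto simp: set_merge_all)

definition certified_columns :: "nat \<Rightarrow> int list list \<Rightarrow> bool" where
  "certified_columns n cs \<longleftrightarrow> 0 < n \<and>
     list_all (\<lambda>c. length c = n \<and> msort c = [0..int n - 1]) cs \<and>
     sorted_wrt (\<lambda>xs ys. remdups_adj (msort (map2 (\<lambda>x y. (x - y) mod int n) xs ys)) = [1..int n - 1]) cs"

lemma residue_permutation_certified:
  assumes "length c = n" "msort c = [0..int n - 1]"
  shows "residue_permutation n c"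
proof -
  have "set c = {0..int n - 1}" using assms(2) set_msort[of c] by simp
  also have "\<dots> = {0..<int n}" by auto
  finally show ?thesis using assms(1) by (simp add: residue_permutation_def)
qed

lemma mod_differences_certified:
  assumes "remdups_adj (msort (map2 (\<lambda>x y. (x - y) mod int n) xs ys)) = [1..int n - 1]"
  shows "mod_differences n xs ys = {1..<int n}"
proof -
  have "mod_differences n xs ys = set (remdups_adj (msort (map2 (\<lambda>x y. (x - y) mod int n) xs ys)))"
    by (simp only: mod_differences_def remdups_adj_set set_msort)
  also have "\<dots> = {1..int n - 1}" by (simp only: assms set_upto)
  also have "\<dots> = {1..<int n}" by auto
  finally show ?thesis .
qed

lemma certified_columns_DCA:
  assumes "certified_columns n cs"
  shows "is_DCA (length cs + 1) (n + 1) n (column_array n cs)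
    \<and> DCA_normalized (length cs + 1) n (column_array n cs)
    \<and> DCA_P1 (length cs + 1) n (column_array n cs)
    \<and> DCA_P2 (length cs + 1) n (column_array n cs)"
proof -
  have n_pos: "0 < n" using assms by (simp add: certified_columns_def)
  have perm: "\<forall>c\<in>set cs. residue_permutation n c"
    using assms by (auto simp: certified_columns_def list_all_iff residue_permutation_certified)
  have diff: "sorted_wrt (\<lambda>xs ys. mod_differences n xs ys = {1..<int n}) cs"
    using assms unfolding certified_columns_def
    by (elim conjE sorted_wrt_mono_rel[rotated]) (erule mod_differences_certified)
  show ?thesis
    using column_array_is_DCA[OF n_pos perm diff] column_array_normalized
      column_array_P1[OF n_pos perm diff] column_array_P2[OF n_pos perm diff] by blast
qed

definition columns_140 :: "int list list" where
  "columns_140 = [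
   [70, 91, 112, 63, 49, 105, 56, 42, 98, 119, 77, 28, 14, 0, 21, 7, 133, 84, 35, 126, 120, 100,
    60, 1, 121, 81, 22, 2, 102, 43, 23, 123, 64, 44, 4, 85, 65, 25, 106, 86, 46, 127, 107, 67,
    8, 128, 88, 29, 9, 109, 50, 30, 130, 71, 51, 11, 92, 72, 32, 113, 93, 53, 134, 114, 74, 15,
    135, 95, 36, 16, 116, 57, 37, 137, 78, 58, 18, 99, 79, 39, 80, 20, 40, 101, 41, 61, 122, 62,
    82, 3, 83, 103, 24, 104, 124, 45, 125, 5, 66, 6, 26, 87, 27, 47, 108, 48, 68, 129, 69, 89,
    10, 90, 110, 31, 111, 131, 52, 132, 12, 73, 13, 33, 94, 34, 54, 115, 55, 75, 136, 76, 96,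
    17, 97, 117, 38, 118, 138, 59, 139, 19],
   [35, 112, 84, 126, 28, 0, 42, 119, 56, 63, 91, 98, 70, 7, 14, 49, 21, 133, 105, 77, 23, 123,
    43, 135, 95, 15, 104, 124, 24, 32, 92, 72, 67, 127, 107, 11, 71, 51, 52, 132, 12, 81, 1,
    121, 129, 69, 89, 87, 27, 47, 118, 138, 38, 93, 53, 113, 97, 117, 17, 9, 109, 29, 79, 39,
    99, 125, 5, 45, 34, 54, 94, 86, 46, 106, 122, 62, 82, 20, 40, 80, 88, 8, 128, 60, 120, 100,
    57, 37, 137, 55, 75, 115, 61, 101, 41, 78, 58, 18, 26, 66, 6, 74, 134, 114, 139, 19, 59, 65,
    25, 85, 90, 110, 10, 4, 64, 44, 76, 96, 136, 103, 3, 83, 111, 131, 31, 22, 2, 102, 68, 108,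
    48, 36, 16, 116, 33, 73, 13, 130, 50, 30],
   [105, 49, 28, 77, 126, 70, 84, 133, 42, 91, 7, 21, 35, 119, 63, 56, 0, 14, 98, 112, 53, 113,
    93, 82, 122, 62, 9, 109, 29, 90, 110, 10, 13, 33, 73, 75, 115, 55, 114, 74, 134, 48, 68,
    108, 2, 102, 22, 27, 47, 87, 61, 101, 41, 95, 15, 135, 89, 129, 69, 45, 125, 5, 116, 36, 16,
    121, 81, 1, 58, 18, 78, 12, 52, 132, 96, 136, 76, 3, 83, 103, 20, 40, 80, 111, 131, 31, 138,
    38, 118, 86, 46, 106, 100, 60, 120, 88, 8, 128, 43, 23, 123, 99, 79, 39, 117, 17, 97, 34,
    54, 94, 44, 4, 64, 124, 24, 104, 51, 11, 71, 32, 92, 72, 19, 59, 139, 30, 130, 50, 127, 107,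
    67, 137, 57, 37, 6, 26, 66, 85, 65, 25]]"

lemma columns_140_certified: "certified_columns 140 columns_140"
  by code_simp

definition columns_196 :: "int list list" where
  "columns_196 = [
   [147, 56, 63, 21, 126, 84, 189, 105, 161, 70, 175, 133, 42, 49, 91, 0, 7, 112, 119, 77, 35,
    14, 168, 28, 182, 140, 98, 154, 8, 36, 64, 92, 120, 148, 176, 16, 72, 128, 184, 44, 100,
    156, 4, 116, 32, 144, 60, 172, 88, 1, 29, 57, 85, 113, 141, 169, 9, 65, 121, 177, 37, 93,
    149, 25, 137, 53, 165, 81, 193, 109, 22, 50, 78, 106, 134, 162, 190, 2, 58, 114, 170, 30,
    86, 142, 18, 130, 46, 158, 74, 186, 102, 15, 43, 71, 99, 127, 155, 183, 23, 79, 135, 191,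
    51, 107, 163, 11, 123, 39, 151, 67, 179, 95, 24, 108, 192, 80, 164, 52, 136, 20, 188, 160,
    132, 104, 76, 48, 12, 152, 96, 40, 180, 124, 68, 17, 101, 185, 73, 157, 45, 129, 13, 181,
    153, 125, 97, 69, 41, 5, 145, 89, 33, 173, 117, 61, 10, 94, 178, 66, 150, 38, 122, 6, 174,
    146, 118, 90, 62, 34, 26, 166, 110, 54, 194, 138, 82, 3, 87, 171, 59, 143, 31, 115, 27, 195,
    167, 139, 111, 83, 55, 19, 159, 103, 47, 187, 131, 75],
   [0, 161, 175, 91, 105, 168, 133, 77, 42, 56, 21, 84, 98, 14, 189, 7, 70, 35, 49, 112, 28,
    147, 63, 126, 140, 154, 119, 182, 5, 145, 89, 33, 173, 117, 61, 17, 101, 185, 73, 157, 45,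
    129, 13, 181, 153, 125, 97, 69, 41, 9, 65, 121, 177, 37, 93, 149, 25, 137, 53, 165, 81, 193,
    109, 1, 29, 57, 85, 113, 141, 169, 4, 116, 32, 144, 60, 172, 88, 8, 36, 64, 92, 120, 148,
    176, 16, 72, 128, 184, 44, 100, 156, 20, 188, 160, 132, 104, 76, 48, 12, 152, 96, 40, 180,
    124, 68, 24, 108, 192, 80, 164, 52, 136, 11, 123, 39, 151, 67, 179, 95, 15, 43, 71, 99, 127,
    155, 183, 23, 79, 135, 191, 51, 107, 163, 19, 159, 103, 47, 187, 131, 75, 3, 87, 171, 59,
    143, 31, 115, 27, 195, 167, 139, 111, 83, 55, 22, 50, 78, 106, 134, 162, 190, 2, 58, 114,
    170, 30, 86, 142, 18, 130, 46, 158, 74, 186, 102, 6, 174, 146, 118, 90, 62, 34, 26, 166,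
    110, 54, 194, 138, 82, 10, 94, 178, 66, 150, 38, 122],
   [49, 140, 35, 77, 168, 112, 56, 42, 84, 28, 119, 14, 7, 147, 0, 91, 182, 126, 70, 63, 105,
    21, 161, 154, 98, 189, 133, 175, 6, 174, 146, 118, 90, 62, 34, 26, 166, 110, 54, 194, 138,
    82, 10, 94, 178, 66, 150, 38, 122, 24, 108, 192, 80, 164, 52, 136, 20, 188, 160, 132, 104,
    76, 48, 12, 152, 96, 40, 180, 124, 68, 23, 79, 135, 191, 51, 107, 163, 11, 123, 39, 151, 67,
    179, 95, 15, 43, 71, 99, 127, 155, 183, 9, 65, 121, 177, 37, 93, 149, 25, 137, 53, 165, 81,
    193, 109, 1, 29, 57, 85, 113, 141, 169, 27, 195, 167, 139, 111, 83, 55, 19, 159, 103, 47,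
    187, 131, 75, 3, 87, 171, 59, 143, 31, 115, 13, 181, 153, 125, 97, 69, 41, 5, 145, 89, 33,
    173, 117, 61, 17, 101, 185, 73, 157, 45, 129, 18, 130, 46, 158, 74, 186, 102, 22, 50, 78,
    106, 134, 162, 190, 2, 58, 114, 170, 30, 86, 142, 16, 72, 128, 184, 44, 100, 156, 4, 116,
    32, 144, 60, 172, 88, 8, 36, 64, 92, 120, 148, 176]]"

lemma columns_196_certified: "certified_columns 196 columns_196"
  by code_simp

definition columns_220 :: "int list list" where
  "columns_220 = [
   [110, 11, 132, 143, 209, 165, 176, 22, 198, 99, 77, 88, 154, 0, 121, 187, 33, 44, 55, 66,
    100, 80, 20, 60, 180, 1, 201, 141, 181, 81, 122, 102, 42, 82, 202, 23, 3, 163, 203, 103,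
    144, 124, 64, 104, 4, 45, 25, 185, 5, 125, 166, 146, 86, 126, 26, 67, 47, 207, 27, 147, 188,
    168, 108, 148, 48, 89, 69, 9, 49, 169, 210, 190, 130, 170, 70, 111, 91, 31, 71, 191, 12,
    212, 152, 192, 92, 133, 113, 53, 93, 213, 34, 14, 174, 214, 114, 155, 135, 75, 115, 15, 56,
    36, 196, 16, 136, 177, 157, 97, 137, 37, 78, 58, 218, 38, 158, 199, 179, 119, 159, 59, 200,
    160, 40, 120, 140, 101, 61, 161, 21, 41, 2, 182, 62, 142, 162, 123, 83, 183, 43, 63, 24,
    204, 84, 164, 184, 145, 105, 205, 65, 85, 46, 6, 106, 186, 206, 167, 127, 7, 87, 107, 68,
    28, 128, 208, 8, 189, 149, 29, 109, 129, 90, 50, 150, 10, 30, 211, 171, 51, 131, 151, 112,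
    72, 172, 32, 52, 13, 193, 73, 153, 173, 134, 94, 194, 54, 74, 35, 215, 95, 175, 195, 156,
    116, 216, 76, 96, 57, 17, 117, 197, 217, 178, 138, 18, 98, 118, 79, 39, 139, 219, 19],
   [55, 132, 44, 66, 88, 0, 22, 99, 176, 143, 11, 198, 110, 187, 154, 209, 121, 33, 165, 77, 20,
    60, 180, 100, 80, 37, 177, 157, 97, 137, 106, 186, 206, 46, 6, 54, 74, 134, 94, 194, 119,
    159, 59, 199, 179, 28, 128, 208, 8, 68, 115, 15, 155, 135, 75, 185, 5, 125, 45, 25, 51, 131,
    151, 211, 171, 39, 139, 219, 19, 79, 158, 78, 58, 218, 38, 92, 12, 212, 152, 192, 9, 49,
    169, 89, 69, 200, 160, 40, 120, 140, 184, 24, 204, 84, 164, 96, 156, 116, 216, 76, 141, 181,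
    81, 1, 201, 32, 52, 112, 72, 172, 7, 87, 107, 167, 127, 118, 178, 138, 18, 98, 34, 14, 174,
    214, 114, 73, 153, 173, 13, 193, 195, 35, 215, 95, 175, 61, 161, 21, 41, 101, 83, 183, 43,
    63, 123, 47, 207, 27, 147, 67, 108, 148, 48, 188, 168, 53, 93, 213, 133, 113, 102, 42, 82,
    202, 122, 56, 36, 196, 16, 136, 50, 150, 10, 30, 90, 17, 117, 197, 217, 57, 205, 65, 85,
    145, 105, 190, 130, 170, 70, 210, 166, 146, 86, 126, 26, 191, 111, 91, 31, 71, 4, 144, 124,
    64, 104, 62, 142, 162, 2, 182, 109, 129, 189, 149, 29, 203, 103, 23, 3, 163],
   [165, 209, 88, 77, 66, 110, 44, 33, 22, 11, 187, 121, 55, 99, 143, 176, 0, 154, 198, 132,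
    116, 216, 76, 96, 156, 182, 62, 142, 162, 2, 9, 49, 169, 89, 69, 196, 16, 136, 56, 36, 10,
    30, 90, 50, 150, 159, 59, 199, 179, 119, 185, 5, 125, 45, 25, 171, 51, 131, 151, 211, 60,
    180, 100, 80, 20, 194, 54, 74, 134, 94, 208, 8, 68, 28, 128, 214, 114, 34, 14, 174, 101, 61,
    161, 21, 41, 113, 53, 93, 213, 133, 71, 191, 111, 91, 31, 29, 109, 129, 189, 149, 146, 86,
    126, 26, 166, 212, 152, 192, 92, 12, 203, 103, 23, 3, 163, 95, 175, 195, 35, 215, 37, 177,
    157, 97, 137, 147, 67, 47, 207, 27, 193, 73, 153, 173, 13, 15, 155, 135, 75, 115, 124, 64,
    104, 4, 144, 204, 84, 164, 184, 24, 87, 107, 167, 127, 7, 82, 202, 122, 102, 42, 170, 70,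
    210, 190, 130, 140, 200, 160, 40, 120, 218, 38, 158, 78, 58, 18, 98, 118, 178, 138, 105,
    205, 65, 85, 145, 217, 57, 17, 117, 197, 32, 52, 112, 72, 172, 83, 183, 43, 63, 123, 219,
    19, 79, 39, 139, 186, 206, 46, 6, 106, 148, 48, 188, 168, 108, 81, 1, 201, 141, 181]]"

lemma columns_220_certified: "certified_columns 220 columns_220"
  by code_simp

definition columns_260 :: "int list list" where
  "columns_260 = [
   [130, 91, 52, 143, 169, 65, 156, 182, 78, 39, 117, 208, 234, 0, 221, 247, 13, 104, 195, 26,
    40, 160, 120, 220, 100, 140, 1, 121, 81, 181, 61, 101, 222, 82, 42, 142, 22, 62, 183, 43, 3,
    103, 243, 23, 144, 4, 224, 64, 204, 244, 105, 225, 185, 25, 165, 205, 66, 186, 146, 246,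
    126, 166, 27, 147, 107, 207, 87, 127, 248, 108, 68, 168, 48, 88, 209, 69, 29, 129, 9, 49,
    170, 30, 250, 90, 230, 10, 131, 251, 211, 51, 191, 231, 92, 212, 172, 12, 152, 192, 53, 173,
    133, 233, 113, 153, 14, 134, 94, 194, 74, 114, 235, 95, 55, 155, 35, 75, 196, 56, 16, 116,
    256, 36, 157, 17, 237, 77, 217, 257, 118, 238, 198, 38, 178, 218, 79, 199, 159, 259, 139,
    179, 80, 60, 240, 180, 200, 20, 41, 21, 201, 141, 161, 241, 2, 242, 162, 102, 122, 202, 223,
    203, 123, 63, 83, 163, 184, 164, 84, 24, 44, 124, 145, 125, 45, 245, 5, 85, 106, 86, 6, 206,
    226, 46, 67, 47, 227, 167, 187, 7, 28, 8, 188, 128, 148, 228, 249, 229, 149, 89, 109, 189,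
    210, 190, 110, 50, 70, 150, 171, 151, 71, 11, 31, 111, 132, 112, 32, 232, 252, 72, 93, 73,
    253, 193, 213, 33, 54, 34, 214, 154, 174, 254, 15, 255, 175, 115, 135, 215, 236, 216, 136,
    76, 96, 176, 197, 177, 97, 37, 57, 137, 158, 138, 58, 258, 18, 98, 119, 99, 19, 219, 239, 59],
   [195, 52, 104, 26, 208, 0, 182, 39, 156, 143, 91, 78, 130, 247, 234, 169, 221, 13, 65, 117,
    249, 229, 149, 89, 109, 189, 194, 74, 114, 14, 134, 94, 226, 46, 106, 86, 6, 206, 133, 233,
    113, 153, 53, 173, 212, 172, 12, 152, 192, 92, 32, 232, 252, 72, 132, 112, 17, 237, 77, 217,
    257, 157, 3, 103, 243, 23, 183, 43, 126, 166, 66, 186, 146, 246, 191, 231, 131, 251, 211,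
    51, 71, 11, 31, 111, 171, 151, 215, 15, 255, 175, 115, 135, 227, 167, 187, 7, 67, 47, 5, 85,
    145, 125, 45, 245, 68, 168, 48, 88, 248, 108, 102, 122, 202, 2, 242, 162, 8, 188, 128, 148,
    228, 28, 147, 107, 207, 87, 127, 27, 140, 40, 160, 120, 220, 100, 4, 224, 64, 204, 244, 144,
    137, 197, 177, 97, 37, 57, 174, 254, 54, 34, 214, 154, 180, 200, 20, 80, 60, 240, 142, 22,
    62, 222, 82, 42, 181, 61, 101, 1, 121, 81, 30, 250, 90, 230, 10, 170, 49, 209, 69, 29, 129,
    9, 56, 16, 116, 256, 36, 196, 123, 63, 83, 163, 223, 203, 105, 225, 185, 25, 165, 205, 21,
    201, 141, 161, 241, 41, 199, 159, 259, 139, 179, 79, 18, 98, 158, 138, 58, 258, 76, 96, 176,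
    236, 216, 136, 73, 253, 193, 213, 33, 93, 235, 95, 55, 155, 35, 75, 110, 50, 70, 150, 210,
    190, 118, 238, 198, 38, 178, 218, 164, 84, 24, 44, 124, 184, 59, 119, 99, 19, 219, 239],
   [65, 169, 208, 117, 26, 130, 104, 13, 182, 91, 247, 221, 195, 39, 143, 156, 0, 234, 78, 52,
    84, 24, 44, 124, 184, 164, 21, 201, 141, 161, 241, 41, 177, 97, 37, 57, 137, 197, 202, 2,
    242, 162, 102, 122, 214, 154, 174, 254, 54, 34, 42, 142, 22, 62, 222, 82, 98, 158, 138, 58,
    258, 18, 67, 47, 227, 167, 187, 7, 114, 14, 134, 94, 194, 74, 70, 150, 210, 190, 110, 50,
    204, 244, 144, 4, 224, 64, 80, 60, 240, 180, 200, 20, 108, 68, 168, 48, 88, 248, 29, 129, 9,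
    49, 209, 69, 35, 75, 235, 95, 55, 155, 8, 188, 128, 148, 228, 28, 19, 219, 239, 59, 119, 99,
    126, 166, 66, 186, 146, 246, 85, 145, 125, 45, 245, 5, 101, 1, 121, 81, 181, 61, 183, 43, 3,
    103, 243, 23, 152, 192, 92, 212, 172, 12, 32, 232, 252, 72, 132, 112, 136, 76, 96, 176, 236,
    216, 109, 189, 249, 229, 149, 89, 113, 153, 53, 173, 133, 233, 63, 83, 163, 223, 203, 123,
    165, 205, 105, 225, 185, 25, 226, 46, 106, 86, 6, 206, 215, 15, 255, 175, 115, 135, 77, 217,
    257, 157, 17, 237, 259, 139, 179, 79, 199, 159, 16, 116, 256, 36, 196, 56, 218, 118, 238,
    198, 38, 178, 213, 33, 93, 73, 253, 193, 90, 230, 10, 170, 30, 250, 107, 207, 87, 127, 27,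
    147, 211, 51, 191, 231, 131, 251, 140, 40, 160, 120, 220, 100, 11, 31, 111, 171, 151, 71]]"

lemma columns_260_certified: "certified_columns 260 columns_260"
  by code_simp

definition columns_308 :: "int list list" where
  "columns_308 = [
   [77, 176, 121, 143, 242, 264, 55, 99, 275, 66, 165, 187, 286, 231, 209, 0, 253, 44, 297, 11,
    33, 198, 220, 88, 110, 132, 154, 22, 56, 168, 196, 280, 224, 1, 113, 141, 225, 169, 254, 58,
    86, 170, 114, 199, 3, 31, 115, 59, 144, 256, 284, 60, 4, 89, 201, 229, 5, 257, 34, 146, 174,
    258, 202, 287, 91, 119, 203, 147, 232, 36, 64, 148, 92, 177, 289, 9, 93, 37, 122, 234, 262,
    38, 290, 67, 179, 207, 291, 235, 12, 124, 152, 236, 180, 265, 69, 97, 181, 125, 210, 14, 42,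
    126, 70, 155, 267, 295, 71, 15, 100, 212, 240, 16, 268, 45, 157, 185, 269, 213, 298, 102,
    130, 214, 158, 243, 47, 75, 159, 103, 188, 300, 20, 104, 48, 133, 245, 273, 49, 301, 78,
    190, 218, 302, 246, 23, 135, 163, 247, 191, 276, 80, 108, 192, 136, 221, 25, 53, 137, 81,
    166, 278, 306, 82, 26, 111, 223, 251, 27, 279, 112, 28, 84, 252, 140, 57, 281, 29, 197, 85,
    2, 226, 282, 142, 30, 255, 171, 227, 87, 283, 200, 116, 172, 32, 228, 145, 61, 117, 285,
    173, 90, 6, 62, 230, 118, 35, 259, 7, 175, 63, 288, 204, 260, 120, 8, 233, 149, 205, 65,
    261, 178, 94, 150, 10, 206, 123, 39, 95, 263, 151, 68, 292, 40, 208, 96, 13, 237, 293, 153,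
    41, 266, 182, 238, 98, 294, 211, 127, 183, 43, 239, 156, 72, 128, 296, 184, 101, 17, 73,
    241, 129, 46, 270, 18, 186, 74, 299, 215, 271, 131, 19, 244, 160, 216, 76, 272, 189, 105,
    161, 21, 217, 134, 50, 106, 274, 162, 79, 303, 51, 219, 107, 24, 248, 304, 164, 52, 277,
    193, 249, 109, 305, 222, 138, 194, 54, 250, 167, 83, 139, 307, 195],
   [0, 275, 165, 209, 99, 220, 187, 11, 286, 176, 143, 264, 154, 198, 55, 253, 66, 33, 231, 44,
    88, 77, 121, 242, 132, 22, 297, 110, 9, 93, 37, 177, 289, 72, 128, 296, 184, 156, 250, 222,
    138, 194, 54, 20, 104, 48, 188, 300, 136, 276, 80, 108, 192, 258, 202, 34, 146, 174, 50,
    106, 274, 162, 134, 140, 112, 28, 84, 252, 49, 301, 133, 245, 273, 17, 73, 241, 129, 101,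
    119, 203, 147, 287, 91, 62, 230, 118, 90, 6, 130, 214, 158, 298, 102, 268, 100, 212, 240,
    16, 195, 167, 83, 139, 307, 294, 266, 182, 238, 98, 284, 60, 4, 144, 256, 236, 180, 12, 124,
    152, 8, 288, 204, 260, 120, 26, 166, 278, 306, 82, 225, 169, 1, 113, 141, 269, 213, 45, 157,
    185, 24, 248, 304, 164, 52, 246, 78, 190, 218, 302, 127, 183, 43, 239, 211, 247, 191, 23,
    135, 163, 234, 262, 38, 290, 122, 97, 181, 125, 265, 69, 254, 58, 86, 170, 114, 197, 85, 57,
    281, 29, 285, 173, 145, 61, 117, 32, 228, 200, 116, 172, 207, 291, 235, 67, 179, 223, 251,
    27, 279, 111, 292, 40, 208, 96, 68, 168, 196, 280, 224, 56, 215, 271, 131, 19, 299, 293,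
    153, 41, 13, 237, 155, 267, 295, 71, 15, 39, 95, 263, 151, 123, 149, 205, 65, 261, 233, 51,
    219, 107, 79, 303, 3, 31, 115, 59, 199, 142, 30, 2, 226, 282, 76, 272, 244, 160, 216, 305,
    277, 193, 249, 109, 206, 178, 94, 150, 10, 171, 227, 87, 283, 255, 25, 53, 137, 81, 221,
    259, 7, 175, 63, 35, 89, 201, 229, 5, 257, 217, 189, 105, 161, 21, 126, 70, 210, 14, 42,
    103, 243, 47, 75, 159, 64, 148, 92, 232, 36, 186, 74, 46, 270, 18],
   [231, 132, 33, 11, 220, 44, 176, 286, 264, 88, 297, 198, 253, 77, 0, 209, 110, 242, 66, 121,
    99, 143, 275, 22, 154, 55, 187, 165, 114, 254, 58, 86, 170, 80, 108, 192, 136, 276, 193,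
    249, 109, 305, 277, 124, 152, 236, 180, 12, 150, 10, 206, 178, 94, 131, 19, 299, 215, 271,
    186, 74, 46, 270, 18, 17, 73, 241, 129, 101, 252, 140, 112, 28, 84, 20, 104, 48, 188, 300,
    190, 218, 302, 246, 78, 158, 298, 102, 130, 214, 15, 155, 267, 295, 71, 171, 227, 87, 283,
    255, 43, 239, 211, 127, 183, 233, 149, 205, 65, 261, 301, 133, 245, 273, 49, 212, 240, 16,
    268, 100, 306, 82, 26, 166, 278, 250, 222, 138, 194, 54, 30, 2, 226, 282, 142, 179, 207,
    291, 235, 67, 203, 147, 287, 91, 119, 274, 162, 134, 50, 106, 153, 41, 13, 237, 293, 42,
    126, 70, 210, 14, 79, 303, 51, 219, 107, 83, 139, 307, 195, 167, 32, 228, 200, 116, 172, 34,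
    146, 174, 258, 202, 31, 115, 59, 199, 3, 238, 98, 294, 266, 182, 292, 40, 208, 96, 68, 52,
    24, 248, 304, 164, 8, 288, 204, 260, 120, 61, 117, 285, 173, 145, 217, 189, 105, 161, 21,
    23, 135, 163, 247, 191, 63, 35, 259, 7, 175, 4, 144, 256, 284, 60, 280, 224, 56, 168, 196,
    151, 123, 39, 95, 263, 38, 290, 122, 234, 262, 148, 92, 232, 36, 64, 243, 47, 75, 159, 103,
    9, 93, 37, 177, 289, 5, 257, 89, 201, 229, 118, 90, 6, 62, 230, 225, 169, 1, 113, 141, 25,
    53, 137, 81, 221, 184, 156, 72, 128, 296, 281, 29, 197, 85, 57, 272, 244, 160, 216, 76, 265,
    69, 97, 181, 125, 157, 185, 269, 213, 45, 251, 27, 279, 111, 223]]"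

lemma columns_308_certified: "certified_columns 308 columns_308"
  by code_simp

definition columns_340 :: "int list list" where
  "columns_340 = [
   [170, 51, 272, 323, 289, 85, 136, 102, 238, 119, 17, 68, 34, 0, 221, 187, 153, 204, 255, 306,
    120, 240, 140, 280, 220, 100, 200, 60, 1, 121, 21, 161, 101, 321, 81, 281, 222, 2, 242, 42,
    322, 202, 302, 162, 103, 223, 123, 263, 203, 83, 183, 43, 324, 104, 4, 144, 84, 304, 64,
    264, 205, 325, 225, 25, 305, 185, 285, 145, 86, 206, 106, 246, 186, 66, 166, 26, 307, 87,
    327, 127, 67, 287, 47, 247, 188, 308, 208, 8, 288, 168, 268, 128, 69, 189, 89, 229, 169, 49,
    149, 9, 290, 70, 310, 110, 50, 270, 30, 230, 171, 291, 191, 331, 271, 151, 251, 111, 52,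
    172, 72, 212, 152, 32, 132, 332, 273, 53, 293, 93, 33, 253, 13, 213, 154, 274, 174, 314,
    254, 134, 234, 94, 35, 155, 55, 195, 135, 15, 115, 315, 256, 36, 276, 76, 16, 236, 336, 196,
    137, 257, 157, 297, 237, 117, 217, 77, 18, 138, 38, 178, 118, 338, 98, 298, 239, 19, 259,
    59, 339, 219, 319, 179, 20, 40, 80, 160, 320, 300, 260, 180, 241, 261, 301, 41, 201, 181,
    141, 61, 122, 142, 182, 262, 82, 62, 22, 282, 3, 23, 63, 143, 303, 283, 243, 163, 224, 244,
    284, 24, 184, 164, 124, 44, 105, 125, 165, 245, 65, 45, 5, 265, 326, 6, 46, 126, 286, 266,
    226, 146, 207, 227, 267, 7, 167, 147, 107, 27, 88, 108, 148, 228, 48, 28, 328, 248, 309,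
    329, 29, 109, 269, 249, 209, 129, 190, 210, 250, 330, 150, 130, 90, 10, 71, 91, 131, 211,
    31, 11, 311, 231, 292, 312, 12, 92, 252, 232, 192, 112, 173, 193, 233, 313, 133, 113, 73,
    333, 54, 74, 114, 194, 14, 334, 294, 214, 275, 295, 335, 75, 235, 215, 175, 95, 156, 176,
    216, 296, 116, 96, 56, 316, 37, 57, 97, 177, 337, 317, 277, 197, 258, 278, 318, 58, 218,
    198, 158, 78, 139, 159, 199, 279, 99, 79, 39, 299],
   [255, 272, 204, 306, 68, 0, 102, 119, 136, 323, 51, 238, 170, 187, 34, 289, 221, 153, 85, 17,
    11, 311, 231, 71, 91, 131, 211, 31, 299, 139, 159, 199, 279, 99, 79, 39, 148, 228, 48, 28,
    328, 248, 88, 108, 152, 32, 132, 332, 52, 172, 72, 212, 309, 329, 29, 109, 269, 249, 209,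
    129, 93, 33, 253, 13, 213, 273, 53, 293, 267, 7, 167, 147, 107, 27, 207, 227, 114, 194, 14,
    334, 294, 214, 54, 74, 165, 245, 65, 45, 5, 265, 105, 125, 81, 281, 1, 121, 21, 161, 101,
    321, 100, 200, 60, 120, 240, 140, 280, 220, 126, 286, 266, 226, 146, 326, 6, 46, 314, 254,
    134, 234, 94, 154, 274, 174, 236, 336, 196, 256, 36, 276, 76, 16, 124, 44, 224, 244, 284,
    24, 184, 164, 300, 260, 180, 20, 40, 80, 160, 320, 37, 57, 97, 177, 337, 317, 277, 197, 191,
    331, 271, 151, 251, 111, 171, 291, 150, 130, 90, 10, 190, 210, 250, 330, 195, 135, 15, 115,
    315, 35, 155, 55, 219, 319, 179, 239, 19, 259, 59, 339, 143, 303, 283, 243, 163, 3, 23, 63,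
    198, 158, 78, 258, 278, 318, 58, 218, 183, 43, 103, 223, 123, 263, 203, 83, 128, 188, 308,
    208, 8, 288, 168, 268, 69, 189, 89, 229, 169, 49, 149, 9, 295, 335, 75, 235, 215, 175, 95,
    275, 324, 104, 4, 144, 84, 304, 64, 264, 201, 181, 141, 61, 241, 261, 301, 41, 322, 202,
    302, 162, 222, 2, 242, 42, 257, 157, 297, 237, 117, 217, 77, 137, 70, 310, 110, 50, 270, 30,
    230, 290, 118, 338, 98, 298, 18, 138, 38, 178, 87, 327, 127, 67, 287, 47, 247, 307, 325,
    225, 25, 305, 185, 285, 145, 205, 193, 233, 313, 133, 113, 73, 333, 173, 296, 116, 96, 56,
    316, 156, 176, 216, 92, 252, 232, 192, 112, 292, 312, 12, 186, 66, 166, 26, 86, 206, 106,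
    246, 182, 262, 82, 62, 22, 282, 122, 142],
   [85, 289, 68, 17, 306, 170, 204, 153, 102, 51, 187, 221, 255, 119, 323, 136, 0, 34, 238, 272,
    7, 167, 147, 107, 27, 207, 227, 267, 258, 278, 318, 58, 218, 198, 158, 78, 60, 120, 240,
    140, 280, 220, 100, 200, 142, 182, 262, 82, 62, 22, 282, 122, 12, 92, 252, 232, 192, 112,
    292, 312, 194, 14, 334, 294, 214, 54, 74, 114, 149, 9, 69, 189, 89, 229, 169, 49, 203, 83,
    183, 43, 103, 223, 123, 263, 108, 148, 228, 48, 28, 328, 248, 88, 293, 93, 33, 253, 13, 213,
    273, 53, 184, 164, 124, 44, 224, 244, 284, 24, 332, 52, 172, 72, 212, 152, 32, 132, 155, 55,
    195, 135, 15, 115, 315, 35, 260, 180, 20, 40, 80, 160, 320, 300, 299, 139, 159, 199, 279,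
    99, 79, 39, 230, 290, 70, 310, 110, 50, 270, 30, 42, 322, 202, 302, 162, 222, 2, 242, 29,
    109, 269, 249, 209, 129, 309, 329, 8, 288, 168, 268, 128, 188, 308, 208, 321, 81, 281, 1,
    121, 21, 161, 101, 19, 259, 59, 339, 219, 319, 179, 239, 297, 237, 117, 217, 77, 137, 257,
    157, 335, 75, 235, 215, 175, 95, 275, 295, 11, 311, 231, 71, 91, 131, 211, 31, 216, 296,
    116, 96, 56, 316, 156, 176, 165, 245, 65, 45, 5, 265, 105, 125, 97, 177, 337, 317, 277, 197,
    37, 57, 144, 84, 304, 64, 264, 324, 104, 4, 330, 150, 130, 90, 10, 190, 210, 250, 127, 67,
    287, 47, 247, 307, 87, 327, 256, 36, 276, 76, 16, 236, 336, 196, 301, 41, 201, 181, 141, 61,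
    241, 261, 25, 305, 185, 285, 145, 205, 325, 225, 234, 94, 154, 274, 174, 314, 254, 134, 18,
    138, 38, 178, 118, 338, 98, 298, 26, 86, 206, 106, 246, 186, 66, 166, 331, 271, 151, 251,
    111, 171, 291, 191, 46, 126, 286, 266, 226, 146, 326, 6, 23, 63, 143, 303, 283, 243, 163, 3,
    133, 113, 73, 333, 173, 193, 233, 313]]"

lemma columns_340_certified: "certified_columns 340 columns_340"
  by code_simp

theorem mainTheorem12:
  assumes "n \<in> {140, 196, 220, 260, 308, 340::nat}"
  shows "\<exists>Q. is_DCA 4 (n+1) n Q \<and> DCA_normalized 4 n Q \<and> DCA_P1 4 n Q \<and> DCA_P2 4 n Q"
proof -
  obtain cs where "certified_columns n cs" "length cs = 3"
    using assms columns_140_certified columns_196_certified columns_220_certified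
      columns_260_certified columns_308_certified columns_340_certified
    by (auto simp: columns_140_def columns_196_def columns_220_def
        columns_260_def columns_308_def columns_340_def)
  then show ?thesis
    using certified_columns_DCA[of n cs] by (intro exI[of _ "column_array n cs"]) simp
qed

end
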